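(* Let $\Gamma$, $\Delta$, $\Sigma$ be finite multisets of formulas not containing $\ast$. If the multi-succedent sequent $\Gamma, \Delta \Rightarrow \Sigma$ is derivable in classical propositional logic (i.e. the conjunction of $\Gamma,\Delta$ classically entails the disjunction of $\Sigma$), then \[ \Pi_V, \Gamma, \lnot_\ast\lnot\Delta, \lnot_\ast\Sigma \vdash_i \ast \] for every set $V$ of propositional variables containing \[ (\mathcal{V}^-(\Gamma,\Delta) \cup \mathcal{V}^+(\Sigma)) \cap (\mathcal{V}^+_{ns}(\Gamma) \cup \mathcal{V}^+(\Delta) \cup \mathcal{V}^-(\Sigma)). \] Here $\lnot_\ast\lnot\Delta$ denotes the multiset $\lnot_\ast\lnot D_1,\ldots,\lnot_\ast\lnot D_n$ if $\Delta = D_1,\ldots,D_n$, and $\lnot_\ast\Sigma$ denotes $\lnot_\ast S_1,\ldots,\lnot_\ast S_m$ if $\Sigma=S_1,\ldots,S_m$.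
   Context: Formulas are built from propositional variables and $\bot$ using $\land$, $\lor$, $\to$; $\lnot A$ abbreviates $A \to \bot$. $\ast$ is a distinguished propositional letter (placeholder), and $\lnot_\ast A$ abbreviates $A \to \ast$. For a set $V$ of propositional variables, $\Pi_V = \{ p \lor \lnot p \mid p \in V\}$. $\vdash_i$ denotes derivability in intuitionistic propositional logic (e.g. in the sequent calculus G3ip). The sets $\mathcal{V}^+(A)$, $\mathcal{V}^-(A)$ of variables occurring positively, negatively in $A$ are defined simultaneously by: $\mathcal{V}^+(p)=\{p\}$, $\mathcal{V}^+(\bot)=\emptyset$, $\mathcal{V}^+(A\land B)=\mathcal{V}^+(A\lor B)=\mathcal{V}^+(A)\cup\mathcal{V}^+(B)$, $\mathcal{V}^+(A\to B)=\mathcal{V}^-(A)\cup\mathcal{V}^+(B)$; $\mathcal{V}^-(p)=\mathcal{V}^-(\bot)=\emptyset$, $\mathcal{V}^-(A\land B)=\mathcal{V}^-(A\lor B)=\mathcal{V}^-(A)\cup\mathcal{V}^-(B)$, $\mathcal{V}^-(A\to B)=\mathcal{V}^+(A)\cup\mathcal{V}^-(B)$. The set $\mathcal{V}^+_{ns}(A)$ of variables occurring non-strictly positively is defined by $\mathcal{V}^+_{ns}(p)=\mathcal{V}^+_{ns}(\bot)=\emptyset$, $\mathcal{V}^+_{ns}(A\land B)=\mathcal{V}^+_{ns}(A\lor B)=\mathcal{V}^+_{ns}(A)\cup\mathcal{V}^+_{ns}(B)$, $\mathcal{V}^+_{ns}(A\to B)=\mathcal{V}^-(A)\cup\mathcal{V}^+_{ns}(B)$.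 For a finite multiset $\Gamma$, $\mathcal{V}^+(\Gamma)=\bigcup_{A\in\Gamma}\mathcal{V}^+(A)$, and similarly for $\mathcal{V}^-$ and $\mathcal{V}^+_{ns}$; $\mathcal{V}^-(\Gamma,\Delta)$ is $\mathcal{V}^-$ of the multiset union. *)

theory Defs
  imports "HOL-Library.Multiset"
begin

datatype 'v form = Var 'v | Bot | And "'v form" "'v form" | Or "'v form" "'v form"
  | Imp "'v form" "'v form"

definition Neg :: "'v form \<Rightarrow> 'v form" where
  "Neg A = Imp A Bot"

text \<open>The placeholder letter is passed explicitly as a variable st.
  negs st A abbreviates A implies st.\<close>
definition negs :: "'v \<Rightarrow> 'v form \<Rightarrow> 'v form" where
  "negs st A = Imp A (Var st)"

fun atoms :: "'v form \<Rightarrow> 'v set" where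
  "atoms (Var p) = {p}"
| "atoms Bot = {}"
| "atoms (And A B) = atoms A \<union> atoms B"
| "atoms (Or A B) = atoms A \<union> atoms B"
| "atoms (Imp A B) = atoms A \<union> atoms B"

definition PiV :: "'v set \<Rightarrow> 'v form set" where
  "PiV V = {Or (Var p) (Neg (Var p)) | p. p \<in> V}"

fun vpos :: "'v form \<Rightarrow> 'v set" and vneg :: "'v form \<Rightarrow> 'v set" where
  "vpos (Var p) = {p}"
| "vpos Bot = {}"
| "vpos (And A B) = vpos A \<union> vpos B"
| "vpos (Or A B) = vpos A \<union> vpos B"
| "vpos (Imp A B) = vneg A \<union> vpos B"
| "vneg (Var p) = {}"
| "vneg Bot = {}"
| "vneg (And A B) = vneg A \<union> vneg B"
| "vneg (Or A B) = vneg A \<union> vneg B"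
| "vneg (Imp A B) = vpos A \<union> vneg B"

fun vns :: "'v form \<Rightarrow> 'v set" where
  "vns (Var p) = {}"
| "vns Bot = {}"
| "vns (And A B) = vns A \<union> vns B"
| "vns (Or A B) = vns A \<union> vns B"
| "vns (Imp A B) = vneg A \<union> vns B"

definition mpos :: "'v form multiset \<Rightarrow> 'v set" where
  "mpos \<Gamma> = (\<Union>A\<in>set_mset \<Gamma>. vpos A)"
definition mneg :: "'v form multiset \<Rightarrow> 'v set" where
  "mneg \<Gamma> = (\<Union>A\<in>set_mset \<Gamma>. vneg A)"
definition mns :: "'v form multiset \<Rightarrow> 'v set" where
  "mns \<Gamma> = (\<Union>A\<in>set_mset \<Gamma>. vns A)"

inductive ideriv :: "'v form set \<Rightarrow> 'v form \<Rightarrow> bool" (infix "\<turnstile>\<^sub>i" 55) where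
  Ass: "A \<in> G \<Longrightarrow> G \<turnstile>\<^sub>i A"
| BotE: "G \<turnstile>\<^sub>i Bot \<Longrightarrow> G \<turnstile>\<^sub>i A"
| AndI: "G \<turnstile>\<^sub>i A \<Longrightarrow> G \<turnstile>\<^sub>i B \<Longrightarrow> G \<turnstile>\<^sub>i And A B"
| AndE1: "G \<turnstile>\<^sub>i And A B \<Longrightarrow> G \<turnstile>\<^sub>i A"
| AndE2: "G \<turnstile>\<^sub>i And A B \<Longrightarrow> G \<turnstile>\<^sub>i B"
| OrI1: "G \<turnstile>\<^sub>i A \<Longrightarrow> G \<turnstile>\<^sub>i Or A B"
| OrI2: "G \<turnstile>\<^sub>i B \<Longrightarrow> G \<turnstile>\<^sub>i Or A B"
| OrE: "G \<turnstile>\<^sub>i Or A B \<Longrightarrow> insert A G \<turnstile>\<^sub>i C \<Longrightarrow> insert B G \<turnstile>\<^sub>i C \<Longrightarrow> G \<turnstile>\<^sub>i C"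
| ImpI: "insert A G \<turnstile>\<^sub>i B \<Longrightarrow> G \<turnstile>\<^sub>i Imp A B"
| ImpE: "G \<turnstile>\<^sub>i Imp A B \<Longrightarrow> G \<turnstile>\<^sub>i A \<Longrightarrow> G \<turnstile>\<^sub>i B"

fun eval :: "('v \<Rightarrow> bool) \<Rightarrow> 'v form \<Rightarrow> bool" where
  "eval I (Var p) = I p"
| "eval I Bot = False"
| "eval I (And A B) = (eval I A \<and> eval I B)"
| "eval I (Or A B) = (eval I A \<or> eval I B)"
| "eval I (Imp A B) = (eval I A \<longrightarrow> eval I B)"

definition cderiv :: "'v form multiset \<Rightarrow> 'v form multiset \<Rightarrow> bool" where
  "cderiv \<Gamma> \<Sigma> \<longleftrightarrow> (\<forall>I. (\<forall>A\<in>#\<Gamma>. eval I A) \<longrightarrow> (\<exists>S\<in>#\<Sigma>. eval I S))"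

end

theory Submission
  imports Defs
begin

(*
  Read Gamma, Delta => Sigma as a sequent whose antecedent splits into
  Gamma (taken literally) and Delta (taken as a negated succedent), and translate it
  into the set of premises  Pi_V, Gamma, neg*neg Delta, neg* Sigma  with goal the
  placeholder *.  For every rule of a cut-free, invertible classical sequent calculus
  the translation of the conclusion is intuitionistically derivable from the
  translations of the premises; these are the "translated rules" below, one for each
  connective on each of the three sides.  Since all rules are invertible and every
  rule decreases the number of formula nodes, induction on that number reduces a
  classically valid sequent to a valid atomic one.  A valid atomic sequent has a
  variable p in the succedent and in the antecedent: if p is in Gamma, then p and
  neg* p give *; if p is in Delta, then p is positive in both Delta and Sigma, so the
  variable condition puts p in V and the excluded-middle premise for p gives *.
  The variable condition is preserved by every decomposition step.
*)

lemma ideriv_mono: "G \<turnstile>\<^sub>i A \<Longrightarrow> G \<subseteq> H \<Longrightarrow> H \<turnstile>\<^sub>i A"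
proof (induction arbitrary: H rule: ideriv.induct)
  case (OrE G A B C)
  then show ?case by (meson ideriv.OrE insert_mono)
next
  case (ImpI A G B)
  then show ?case by (meson ideriv.ImpI insert_mono)
qed (auto intro: ideriv.intros)

lemma weaken_insert: "G \<turnstile>\<^sub>i C \<Longrightarrow> insert A G \<turnstile>\<^sub>i C"
  by (erule ideriv_mono) blast

lemma cut: "G \<turnstile>\<^sub>i A \<Longrightarrow> insert A G \<turnstile>\<^sub>i C \<Longrightarrow> G \<turnstile>\<^sub>i C"
  by (meson ideriv.ImpE ideriv.ImpI)

lemma cut_two: "G \<turnstile>\<^sub>i A \<Longrightarrow> G \<turnstile>\<^sub>i B \<Longrightarrow> insert A (insert B G) \<turnstile>\<^sub>i C \<Longrightarrow> G \<turnstile>\<^sub>i C"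
  by (meson cut weaken_insert)

lemma neg_star_elim: "negs s A \<in> G \<Longrightarrow> G \<turnstile>\<^sub>i A \<Longrightarrow> G \<turnstile>\<^sub>i Var s"
  unfolding negs_def by (meson ideriv.Ass ideriv.ImpE)

lemma neg_star_contra: "insert A G \<turnstile>\<^sub>i B \<Longrightarrow> negs s B \<in> G \<Longrightarrow> G \<turnstile>\<^sub>i negs s A"
  by (metis negs_def ideriv.ImpI insertCI neg_star_elim)

lemma star_split: "insert A G \<turnstile>\<^sub>i Var s \<Longrightarrow> insert (negs s A) G \<turnstile>\<^sub>i Var s \<Longrightarrow> G \<turnstile>\<^sub>i Var s"
  unfolding negs_def by (rule cut[OF ideriv.ImpI])

(* Throughout, a one-premise
   rule holds for every goal C, while a two-premise rule concludes the placeholder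
   and is proved by splitting on neg* of a subformula. *)
lemma bot_left: "insert Bot G \<turnstile>\<^sub>i C"
  by (meson ideriv.Ass ideriv.BotE insertI1)

lemma and_left: "insert A (insert B G) \<turnstile>\<^sub>i C \<Longrightarrow> insert (And A B) G \<turnstile>\<^sub>i C"
  by (rule cut_two[OF ideriv.AndE1 ideriv.AndE2]) (auto intro: ideriv.Ass ideriv_mono)

lemma or_left: "insert A G \<turnstile>\<^sub>i C \<Longrightarrow> insert B G \<turnstile>\<^sub>i C \<Longrightarrow> insert (Or A B) G \<turnstile>\<^sub>i C"
  by (rule ideriv.OrE[OF ideriv.Ass]) (auto intro: ideriv_mono)

lemma imp_left:
  assumes "insert (negs s A) G \<turnstile>\<^sub>i Var s" and "insert B G \<turnstile>\<^sub>i Var s"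
  shows "insert (Imp A B) G \<turnstile>\<^sub>i Var s"
proof (rule star_split)
  have "insert A (insert (Imp A B) G) \<turnstile>\<^sub>i B"
    by (meson ideriv.Ass ideriv.ImpE insertCI)
  then show "insert A (insert (Imp A B) G) \<turnstile>\<^sub>i Var s"
    by (rule cut) (auto intro: ideriv_mono[OF assms(2)])
  show "insert (negs s A) (insert (Imp A B) G) \<turnstile>\<^sub>i Var s"
    by (auto intro: ideriv_mono[OF assms(1)])
qed

lemma neg_and_of_neg1: "insert (Neg A) G \<turnstile>\<^sub>i Neg (And A B)"
  unfolding Neg_def by (meson ideriv.Ass ideriv.ImpI ideriv.ImpE ideriv.AndE1 insertCI)

lemma neg_and_of_neg2: "insert (Neg B) G \<turnstile>\<^sub>i Neg (And A B)"
  unfolding Neg_def by (meson ideriv.Ass ideriv.ImpI ideriv.ImpE ideriv.AndE2 insertCI)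

lemma neg_or_of_negs: "insert (Neg B) (insert (Neg A) G) \<turnstile>\<^sub>i Neg (Or A B)"
  unfolding Neg_def
  by (rule ideriv.ImpI, rule ideriv.OrE[OF ideriv.Ass])
     (auto intro: ideriv.ImpE[OF ideriv.Ass] ideriv.Ass)

lemma neg_imp_of_neg: "insert (Neg B) (insert A G) \<turnstile>\<^sub>i Neg (Imp A B)"
  unfolding Neg_def by (meson ideriv.Ass ideriv.ImpI ideriv.ImpE insertCI)

lemma imp_of_neg_premise: "insert (Neg A) G \<turnstile>\<^sub>i Imp A B"
  unfolding Neg_def by (meson ideriv.Ass ideriv.BotE ideriv.ImpI ideriv.ImpE insertCI)

lemma imp_of_conclusion: "insert B G \<turnstile>\<^sub>i Imp A B"
  by (meson ideriv.Ass ideriv.ImpI insertCI)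

lemma neg_star_neg_bot: "insert (negs s (Neg Bot)) G \<turnstile>\<^sub>i Var s"
  by (rule neg_star_elim[OF insertI1]) (auto simp: Neg_def intro: ideriv.ImpI ideriv.Ass)

lemma neg_star_neg_and:
  "insert (negs s (Neg A)) (insert (negs s (Neg B)) G) \<turnstile>\<^sub>i C
   \<Longrightarrow> insert (negs s (Neg (And A B))) G \<turnstile>\<^sub>i C"
  by (rule cut_two[OF neg_star_contra[OF neg_and_of_neg1] neg_star_contra[OF neg_and_of_neg2]])
     (auto intro: ideriv_mono)

lemma neg_star_neg_or:
  assumes "insert (negs s (Neg A)) G \<turnstile>\<^sub>i Var s" and "insert (negs s (Neg B)) G \<turnstile>\<^sub>i Var s"
  shows "insert (negs s (Neg (Or A B))) G \<turnstile>\<^sub>i Var s"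
proof (rule star_split[of "Neg A"])
  show "insert (Neg A) (insert (negs s (Neg (Or A B))) G) \<turnstile>\<^sub>i Var s"
  proof (rule star_split[of "Neg B"])
    show "insert (Neg B) (insert (Neg A) (insert (negs s (Neg (Or A B))) G)) \<turnstile>\<^sub>i Var s"
      by (rule neg_star_elim[OF _ neg_or_of_negs]) auto
  qed (auto intro: ideriv_mono[OF assms(2)])
qed (auto intro: ideriv_mono[OF assms(1)])

lemma neg_star_neg_imp:
  assumes "insert (negs s A) G \<turnstile>\<^sub>i Var s" and "insert (negs s (Neg B)) G \<turnstile>\<^sub>i Var s"
  shows "insert (negs s (Neg (Imp A B))) G \<turnstile>\<^sub>i Var s"
proof (rule star_split[of A])
  show "insert A (insert (negs s (Neg (Imp A B))) G) \<turnstile>\<^sub>i Var s"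
  proof (rule star_split[of "Neg B"])
    show "insert (Neg B) (insert A (insert (negs s (Neg (Imp A B))) G)) \<turnstile>\<^sub>i Var s"
      by (rule neg_star_elim[OF _ neg_imp_of_neg]) auto
  qed (auto intro: ideriv_mono[OF assms(2)])
qed (auto intro: ideriv_mono[OF assms(1)])

lemma neg_star_and:
  assumes "insert (negs s A) G \<turnstile>\<^sub>i Var s" and "insert (negs s B) G \<turnstile>\<^sub>i Var s"
  shows "insert (negs s (And A B)) G \<turnstile>\<^sub>i Var s"
proof (rule star_split[of A])
  show "insert A (insert (negs s (And A B)) G) \<turnstile>\<^sub>i Var s"
  proof (rule star_split[of B])
    show "insert B (insert A (insert (negs s (And A B)) G)) \<turnstile>\<^sub>i Var s"
      by (rule neg_star_elim[OF _ ideriv.AndI]) (auto intro: ideriv.Ass)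
  qed (auto intro: ideriv_mono[OF assms(2)])
qed (auto intro: ideriv_mono[OF assms(1)])

lemma neg_star_or:
  "insert (negs s A) (insert (negs s B) G) \<turnstile>\<^sub>i C \<Longrightarrow> insert (negs s (Or A B)) G \<turnstile>\<^sub>i C"
  by (rule cut_two[OF neg_star_contra[OF ideriv.OrI1] neg_star_contra[OF ideriv.OrI2]])
     (auto intro: ideriv_mono ideriv.Ass)

lemma neg_star_imp:
  "insert (negs s B) (insert (negs s (Neg A)) G) \<turnstile>\<^sub>i C \<Longrightarrow> insert (negs s (Imp A B)) G \<turnstile>\<^sub>i C"
  by (rule cut_two[OF neg_star_contra[OF imp_of_conclusion] neg_star_contra[OF imp_of_neg_premise]])
     (auto intro: ideriv_mono)

lemma excluded_middle_axiom:
  "Or A (Neg A) \<in> G \<Longrightarrow> negs s A \<in> G \<Longrightarrow> negs s (Neg A) \<in> G \<Longrightarrow> G \<turnstile>\<^sub>i Var s"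
  by (rule ideriv.OrE[OF ideriv.Ass]) (auto intro: neg_star_elim ideriv.Ass)

definition translation ::
  "'v set \<Rightarrow> 'v \<Rightarrow> 'v form multiset \<Rightarrow> 'v form multiset \<Rightarrow> 'v form multiset \<Rightarrow> 'v form set" where
  "translation V s \<Gamma> \<Delta> \<Sigma> =
     PiV V \<union> set_mset \<Gamma> \<union> (\<lambda>D. negs s (Neg D)) ` set_mset \<Delta> \<union> negs s ` set_mset \<Sigma>"

lemma translation_add_mset:
  "translation V s (add_mset F \<Gamma>) \<Delta> \<Sigma> = insert F (translation V s \<Gamma> \<Delta> \<Sigma>)"
  "translation V s \<Gamma> (add_mset F \<Delta>) \<Sigma> = insert (negs s (Neg F)) (translation V s \<Gamma> \<Delta> \<Sigma>)"
  "translation V s \<Gamma> \<Delta> (add_mset F \<Sigma>) = insert (negs s F) (translation V s \<Gamma> \<Delta> \<Sigma>)"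
  by (auto simp: translation_def)

definition var_cond ::
  "'v set \<Rightarrow> 'v form multiset \<Rightarrow> 'v form multiset \<Rightarrow> 'v form multiset \<Rightarrow> bool" where
  "var_cond V \<Gamma> \<Delta> \<Sigma> \<longleftrightarrow>
     (mneg (\<Gamma> + \<Delta>) \<union> mpos \<Sigma>) \<inter> (mns \<Gamma> \<union> mpos \<Delta> \<union> mneg \<Sigma>) \<subseteq> V"

lemma polarity_add_mset:
  "mpos (add_mset F M) = vpos F \<union> mpos M"
  "mneg (add_mset F M) = vneg F \<union> mneg M"
  "mns (add_mset F M) = vns F \<union> mns M"
  by (auto simp: mpos_def mneg_def mns_def)

lemma polarity_union:
  "mpos (M + N) = mpos M \<union> mpos N" "mneg (M + N) = mneg M \<union> mneg N"
  by (auto simp: mpos_def mneg_def)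

lemma atomic_sequent:
  assumes atomic: "\<forall>F\<in>#\<Gamma> + \<Delta> + \<Sigma>. F \<in> range Var"
    and valid: "cderiv (\<Gamma> + \<Delta>) \<Sigma>" and cond: "var_cond V \<Gamma> \<Delta> \<Sigma>"
  shows "translation V s \<Gamma> \<Delta> \<Sigma> \<turnstile>\<^sub>i Var s"
proof -
  define I where "I p \<longleftrightarrow> Var p \<in># \<Gamma> + \<Delta>" for p
  have "\<forall>A\<in>#\<Gamma> + \<Delta>. eval I A"
  proof
    fix A assume "A \<in># \<Gamma> + \<Delta>"
    moreover from this obtain p where "A = Var p"
      using atomic by auto
    ultimately show "eval I A" by (simp add: I_def)
  qed
  then obtain S where "S \<in># \<Sigma>" and "eval I S"
    using valid by (auto simp: cderiv_def)
  moreover obtain p where "S = Var p"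
    using atomic \<open>S \<in># \<Sigma>\<close> by auto
  ultimately have p_succ: "Var p \<in># \<Sigma>" and p_ante: "Var p \<in># \<Gamma> + \<Delta>"
    by (auto simp: I_def)
  have neg_p: "negs s (Var p) \<in> translation V s \<Gamma> \<Delta> \<Sigma>"
    using p_succ by (auto simp: translation_def)
  consider "Var p \<in># \<Gamma>" | "Var p \<in># \<Delta>"
    using p_ante by auto
  then show ?thesis
  proof cases
    case 1
    then show ?thesis
      by (intro neg_star_elim[OF neg_p] ideriv.Ass) (auto simp: translation_def)
  next
    case 2
    have "p \<in> mpos \<Delta>" "p \<in> mpos \<Sigma>"
      using 2 p_succ by (force simp: mpos_def)+
    then have "p \<in> V"
      using cond by (auto simp: var_cond_def)
    then show ?thesis
      using 2 neg_p by (intro excluded_middle_axiom) (auto simp: translation_def PiV_def)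
  qed
qed

fun nodes :: "'v form \<Rightarrow> nat" where
  "nodes (Var p) = 1"
| "nodes Bot = 1"
| "nodes (And A B) = 1 + nodes A + nodes B"
| "nodes (Or A B) = 1 + nodes A + nodes B"
| "nodes (Imp A B) = 1 + nodes A + nodes B"

definition weight :: "'v form multiset \<Rightarrow> nat" where
  "weight M = (\<Sum>F\<in>#M. nodes F)"

lemma weight_simps [simp]:
  "weight (add_mset F M) = nodes F + weight M" "weight (M + N) = weight M + weight N"
  by (simp_all add: weight_def)

definition derivable_below :: "nat \<Rightarrow> 'v set \<Rightarrow> 'v \<Rightarrow> bool" where
  "derivable_below n V s \<longleftrightarrow>
     (\<forall>\<Gamma> \<Delta> \<Sigma>. weight (\<Gamma> + \<Delta> + \<Sigma>) < n \<longrightarrow> cderiv (\<Gamma> + \<Delta>) \<Sigma> \<longrightarrow> var_cond V \<Gamma> \<Delta> \<Sigma>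
        \<longrightarrow> translation V s \<Gamma> \<Delta> \<Sigma> \<turnstile>\<^sub>i Var s)"

lemma derivable_belowD:
  "derivable_below n V s \<Longrightarrow> weight (\<Gamma> + \<Delta> + \<Sigma>) < n \<Longrightarrow> cderiv (\<Gamma> + \<Delta>) \<Sigma>
   \<Longrightarrow> var_cond V \<Gamma> \<Delta> \<Sigma> \<Longrightarrow> translation V s \<Gamma> \<Delta> \<Sigma> \<turnstile>\<^sub>i Var s"
  unfolding derivable_below_def by blast

lemmas reduce_simps = cderiv_def var_cond_def polarity_add_mset polarity_union

lemma reduce_antecedent:
  assumes IH: "derivable_below (weight (add_mset F \<Gamma> + \<Delta> + \<Sigma>)) V s" and "F \<notin> range Var"
    and "cderiv (add_mset F \<Gamma> + \<Delta>) \<Sigma>" and "var_cond V (add_mset F \<Gamma>) \<Delta> \<Sigma>"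
  shows "translation V s (add_mset F \<Gamma>) \<Delta> \<Sigma> \<turnstile>\<^sub>i Var s"
proof (cases F)
  case Bot
  then show ?thesis by (simp add: translation_add_mset bot_left)
next
  case (And A B)
  have "translation V s (add_mset A (add_mset B \<Gamma>)) \<Delta> \<Sigma> \<turnstile>\<^sub>i Var s"
    using assms by (intro derivable_belowD[OF IH]) (auto simp: And reduce_simps)
  then show ?thesis by (simp add: And translation_add_mset and_left)
next
  case (Or A B)
  have "translation V s (add_mset A \<Gamma>) \<Delta> \<Sigma> \<turnstile>\<^sub>i Var s"
    and "translation V s (add_mset B \<Gamma>) \<Delta> \<Sigma> \<turnstile>\<^sub>i Var s"
    using assms by (intro derivable_belowD[OF IH]; auto simp: Or reduce_simps)+
  then show ?thesis by (simp add: Or translation_add_mset or_left)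
next
  case (Imp A B)
  have "translation V s \<Gamma> \<Delta> (add_mset A \<Sigma>) \<turnstile>\<^sub>i Var s"
    and "translation V s (add_mset B \<Gamma>) \<Delta> \<Sigma> \<turnstile>\<^sub>i Var s"
    using assms by (intro derivable_belowD[OF IH]; auto simp: Imp reduce_simps)+
  then show ?thesis by (simp add: Imp translation_add_mset imp_left)
qed (use assms in auto)

lemma reduce_negated:
  assumes IH: "derivable_below (weight (\<Gamma> + add_mset F \<Delta> + \<Sigma>)) V s" and "F \<notin> range Var"
    and "cderiv (\<Gamma> + add_mset F \<Delta>) \<Sigma>" and "var_cond V \<Gamma> (add_mset F \<Delta>) \<Sigma>"
  shows "translation V s \<Gamma> (add_mset F \<Delta>) \<Sigma> \<turnstile>\<^sub>i Var s"
proof (cases F)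
  case Bot
  then show ?thesis by (simp add: translation_add_mset neg_star_neg_bot)
next
  case (And A B)
  have "translation V s \<Gamma> (add_mset A (add_mset B \<Delta>)) \<Sigma> \<turnstile>\<^sub>i Var s"
    using assms by (intro derivable_belowD[OF IH]) (auto simp: And reduce_simps)
  then show ?thesis by (simp add: And translation_add_mset neg_star_neg_and)
next
  case (Or A B)
  have "translation V s \<Gamma> (add_mset A \<Delta>) \<Sigma> \<turnstile>\<^sub>i Var s"
    and "translation V s \<Gamma> (add_mset B \<Delta>) \<Sigma> \<turnstile>\<^sub>i Var s"
    using assms by (intro derivable_belowD[OF IH]; auto simp: Or reduce_simps)+
  then show ?thesis by (simp add: Or translation_add_mset neg_star_neg_or)
next
  case (Imp A B)
  have "translation V s \<Gamma> \<Delta> (add_mset A \<Sigma>) \<turnstile>\<^sub>i Var s"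
    and "translation V s \<Gamma> (add_mset B \<Delta>) \<Sigma> \<turnstile>\<^sub>i Var s"
    using assms by (intro derivable_belowD[OF IH]; auto simp: Imp reduce_simps)+
  then show ?thesis by (simp add: Imp translation_add_mset neg_star_neg_imp)
qed (use assms in auto)

lemma reduce_succedent:
  assumes IH: "derivable_below (weight (\<Gamma> + \<Delta> + add_mset F \<Sigma>)) V s" and "F \<notin> range Var"
    and "cderiv (\<Gamma> + \<Delta>) (add_mset F \<Sigma>)" and "var_cond V \<Gamma> \<Delta> (add_mset F \<Sigma>)"
  shows "translation V s \<Gamma> \<Delta> (add_mset F \<Sigma>) \<turnstile>\<^sub>i Var s"
proof (cases F)
  case Bot
  have "translation V s \<Gamma> \<Delta> \<Sigma> \<turnstile>\<^sub>i Var s"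
    using assms by (intro derivable_belowD[OF IH]) (auto simp: Bot reduce_simps)
  then show ?thesis by (simp add: translation_add_mset weaken_insert)
next
  case (And A B)
  have "translation V s \<Gamma> \<Delta> (add_mset A \<Sigma>) \<turnstile>\<^sub>i Var s"
    and "translation V s \<Gamma> \<Delta> (add_mset B \<Sigma>) \<turnstile>\<^sub>i Var s"
    using assms by (intro derivable_belowD[OF IH]; auto simp: And reduce_simps)+
  then show ?thesis by (simp add: And translation_add_mset neg_star_and)
next
  case (Or A B)
  have "translation V s \<Gamma> \<Delta> (add_mset A (add_mset B \<Sigma>)) \<turnstile>\<^sub>i Var s"
    using assms by (intro derivable_belowD[OF IH]) (auto simp: Or reduce_simps)
  then show ?thesis by (simp add: Or translation_add_mset neg_star_or)
next
  case (Imp A B)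
  have "translation V s \<Gamma> (add_mset A \<Delta>) (add_mset B \<Sigma>) \<turnstile>\<^sub>i Var s"
    using assms by (intro derivable_belowD[OF IH]) (auto simp: Imp reduce_simps)
  then show ?thesis by (simp add: Imp translation_add_mset neg_star_imp)
qed (use assms in auto)

lemma translation_derivable:
  "cderiv (\<Gamma> + \<Delta>) \<Sigma> \<Longrightarrow> var_cond V \<Gamma> \<Delta> \<Sigma> \<Longrightarrow> translation V s \<Gamma> \<Delta> \<Sigma> \<turnstile>\<^sub>i Var s"
proof (induction "weight (\<Gamma> + \<Delta> + \<Sigma>)" arbitrary: \<Gamma> \<Delta> \<Sigma> rule: less_induct)
  case less
  have IH: "derivable_below (weight (\<Gamma> + \<Delta> + \<Sigma>)) V s"
    using less.hyps unfolding derivable_below_def by blast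
  consider (antecedent) F \<Gamma>' where "\<Gamma> = add_mset F \<Gamma>'" "F \<notin> range Var"
    | (negated) F \<Delta>' where "\<Delta> = add_mset F \<Delta>'" "F \<notin> range Var"
    | (succedent) F \<Sigma>' where "\<Sigma> = add_mset F \<Sigma>'" "F \<notin> range Var"
    | (atomic) "\<forall>F\<in>#\<Gamma> + \<Delta> + \<Sigma>. F \<in> range Var"
    by (cases "\<exists>F\<in>#\<Gamma> + \<Delta> + \<Sigma>. F \<notin> range Var") (auto dest!: multi_member_split)
  then show ?case
  proof cases
    case antecedent
    then show ?thesis using IH less.prems by (simp add: reduce_antecedent)
  next
    case negated
    then show ?thesis using IH less.prems by (simp add: reduce_negated)
  next
    case succedent
    then show ?thesis using IH less.prems by (simp add: reduce_succedent)
  next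
    case atomic
    then show ?thesis using less.prems by (rule atomic_sequent)
  qed
qed

theorem proposition3:
  fixes st :: 'v and \<Gamma> \<Delta> \<Sigma> :: "'v form multiset" and V :: "'v set"
  assumes "\<forall>A\<in>#\<Gamma> + \<Delta> + \<Sigma>. st \<notin> atoms A"
    and "cderiv (\<Gamma> + \<Delta>) \<Sigma>"
    and "(mneg (\<Gamma> + \<Delta>) \<union> mpos \<Sigma>) \<inter> (mns \<Gamma> \<union> mpos \<Delta> \<union> mneg \<Sigma>) \<subseteq> V"
  shows "(PiV V \<union> set_mset \<Gamma> \<union> (\<lambda>D. negs st (Neg D)) ` set_mset \<Delta>
           \<union> negs st ` set_mset \<Sigma>) \<turnstile>\<^sub>i Var st"
  using translation_derivable[of \<Gamma> \<Delta> \<Sigma> V st] assms(2,3)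
  by (simp add: translation_def var_cond_def)

end
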